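(* Let $n\ge2$, $X=\{1,\dots,n\}$, and let $\Sigma$ be the set of collections $\tau=\{J_1,\dots,J_{n-1}\}$ of subsets of $X$ with $|J_i|=i$ for each $i$. For $\tau\in\Sigma$ let $v_\tau=(a_1,\dots,a_n)^T\in\mathbb R^n$ where $a_j$ is the number of $i$ with $j\in J_i$. Then the convex hull of $\{v_\tau:\tau\in\Sigma\}$ is the $(n-1)$-permutohedron with parameters $m_1,\dots,m_n=0,1,\dots,n-1$, i.e. the convex hull of all coordinate permutations of $(0,1,\dots,n-1)$. *)

theory Defs
  imports "HOL-Analysis.Analysis"
begin

text \<open>The ground set X = {1..n} is modelled by the finite index type 'n with CARD('n) = n;
  vectors in R^n are elements of real^'n.  A collection tau = {J_1,...,J_{n-1}} is modelled
  as a function from indices i to subsets J_i (only i in {1..<n} is relevant).\<close>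

definition flag_collections :: "(nat \<Rightarrow> 'n::finite set) set" where
  "flag_collections = {\<tau>. \<forall>i\<in>{1..<CARD('n)}. card (\<tau> i) = i}"

definition vtau :: "(nat \<Rightarrow> 'n::finite set) \<Rightarrow> real^'n" where
  "vtau \<tau> = (\<chi> j. real (card {i\<in>{1..<CARD('n)}. j \<in> \<tau> i}))"

definition permutohedron :: "(nat \<Rightarrow> real) \<Rightarrow> (real^'n::finite) set" where
  "permutohedron m = convex hull
     {(\<chi> j. m (\<sigma> j)) | \<sigma>. bij_betw \<sigma> (UNIV :: 'n set) {0..<CARD('n)}}"

end

theory Submission imports Defs begin

text \<open>Every vertex (\<sigma>(1), ..., \<sigma>(n)) of the permutohedron is some v_\<tau>: take J_i to be the i
  coordinates where \<sigma> is largest.  Conversely, a point lies in the convex hull of a finite set as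
  soon as every linear functional attains on that set a value at most its value at the point.
  For the functional a, order the coordinates so that a is increasing and let J_i consist of the
  first i of them; then a \<bullet> v_\<tau> is the sum over i of the a-weight of J_i, which this chain minimises
  term by term, and the chain gives a vertex of the permutohedron.\<close>

definition permutation_vectors :: "(real^'n::finite) set" where
  "permutation_vectors =
     {(\<chi> j. real (\<sigma> j)) | \<sigma>. bij_betw \<sigma> (UNIV :: 'n set) {0..<CARD('n)}}"

definition prefix_flag :: "'a list \<Rightarrow> nat \<Rightarrow> 'a set" where
  "prefix_flag ys i = set (take i ys)"

lemma mem_convex_hull_if_linear_min_le:
  fixes x :: "'a::euclidean_space"
  assumes "compact S"
    and "\<And>a. \<exists>y\<in>S. a \<bullet> y \<le> a \<bullet> x"
  shows "x \<in> convex hull S"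
proof (rule ccontr)
  assume "x \<notin> convex hull S"
  moreover have "closed (convex hull S)"
    using assms(1) by (intro compact_imp_closed compact_convex_hull)
  ultimately obtain a b where "a \<bullet> x < b" "\<forall>z\<in>convex hull S. b < a \<bullet> z"
    using separating_hyperplane_closed_point convex_convex_hull by blast
  moreover obtain y where "y \<in> S" "a \<bullet> y \<le> a \<bullet> x"
    using assms(2) by blast
  ultimately show False
    using hull_inc[of y S] by fastforce
qed

lemma sum_list_take_sorted_le:
  fixes a :: "'a \<Rightarrow> 'b::{ordered_comm_monoid_add,linorder}"
  assumes "sorted (map a ys)" "distinct ys" "A \<subseteq> set ys" "card A = i"
  shows "sum_list (map a (take i ys)) \<le> sum a A"
  using assms
proof (induction ys arbitrary: A i)
  case Nil
  then show ?case by simp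
next
  case (Cons y ys)
  have finA: "finite A"
    using Cons.prems(3) finite_subset by blast
  show ?case
  proof (cases i)
    case 0
    then show ?thesis using Cons.prems finA by simp
  next
    case (Suc k)
    show ?thesis
    proof (cases "y \<in> A")
      case True
      have "sum_list (map a (take k ys)) \<le> sum a (A - {y})"
        using Cons.prems Suc True finA by (intro Cons.IH) auto
      then show ?thesis
        using Suc True finA by (simp add: sum.remove add_left_mono)
    next
      case False
      then obtain x where x: "x \<in> A"
        using Suc Cons.prems(4) card_0_eq finA by fastforce
      have "sum_list (map a (take k ys)) \<le> sum a (A - {x})"
        using Cons.prems Suc False finA x by (intro Cons.IH) auto
      moreover have "a y \<le> a x"
        using Cons.prems(1,3) x False by auto
      ultimately show ?thesis
        using Suc x finA by (simp add: sum.remove add_mono)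
    qed
  qed
qed

lemma inner_vtau:
  fixes a :: "real^'n::finite"
  shows "vtau \<tau> \<bullet> a = (\<Sum>i\<in>{1..<CARD('n)}. \<Sum>j\<in>\<tau> i. a $ j)"
proof -
  have "vtau \<tau> \<bullet> a = (\<Sum>j\<in>UNIV. \<Sum>i\<in>{1..<CARD('n)}. if j \<in> \<tau> i then a $ j else 0)"
    by (simp add: inner_vec_def vtau_def sum.If_cases sum_distrib_right Int_def)
  also have "\<dots> = (\<Sum>i\<in>{1..<CARD('n)}. \<Sum>j\<in>UNIV. if j \<in> \<tau> i then a $ j else 0)"
    by (rule sum.swap)
  also have "\<dots> = (\<Sum>i\<in>{1..<CARD('n)}. \<Sum>j\<in>\<tau> i. a $ j)"
    by (simp add: sum.inter_filter[symmetric] Int_def)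
  finally show ?thesis .
qed

lemma card_prefix_flag_nth:
  fixes ys :: "'n::finite list"
  assumes "distinct ys" "set ys = UNIV" "p < CARD('n)"
  shows "card {i\<in>{1..<CARD('n)}. ys ! p \<in> prefix_flag ys i} = CARD('n) - 1 - p"
proof -
  have len: "length ys = CARD('n)"
    using distinct_card[OF assms(1)] assms(2) by simp
  have "ys ! p \<in> set (take i ys) \<longleftrightarrow> p < i" if "i \<le> CARD('n)" for i
    using that assms len by (auto simp: in_set_conv_nth nth_eq_iff_index_eq)
  then have "{i\<in>{1..<CARD('n)}. ys ! p \<in> prefix_flag ys i} = {Suc p..<CARD('n)}"
    by (auto simp: prefix_flag_def)
  then show ?thesis
    by simp
qed

lemma vtau_prefix_flag_in_permutation_vectors:
  fixes ys :: "'n::finite list"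
  assumes "distinct ys" "set ys = UNIV"
  shows "vtau (prefix_flag ys) \<in> permutation_vectors"
proof -
  let ?n = "CARD('n)"
  define \<sigma> where "\<sigma> j = card {i\<in>{1..<?n}. j \<in> prefix_flag ys i}" for j
  have len: "length ys = ?n"
    using distinct_card[OF assms(1)] assms(2) by simp
  have nth_surj: "\<exists>p<?n. j = ys ! p" for j
    using assms(2) len by (metis UNIV_I in_set_conv_nth)
  have \<sigma>_nth: "\<sigma> (ys ! p) = ?n - 1 - p" if "p < ?n" for p
    unfolding \<sigma>_def using card_prefix_flag_nth[OF assms that] .
  have \<sigma>_range_and_inverse: "\<sigma> j < ?n \<and> ys ! (?n - 1 - \<sigma> j) = j" for j
  proof -
    obtain p where "p < ?n" "j = ys ! p"
      using nth_surj by blast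
    then show ?thesis
      using \<sigma>_nth by simp
  qed
  have "bij_betw \<sigma> UNIV {0..<?n}"
    by (rule bij_betw_byWitness[where f' = "\<lambda>k. ys ! (?n - 1 - k)"])
      (use \<sigma>_range_and_inverse \<sigma>_nth in auto)
  moreover have "vtau (prefix_flag ys) = (\<chi> j. real (\<sigma> j))"
    unfolding vtau_def \<sigma>_def ..
  ultimately show ?thesis
    unfolding permutation_vectors_def by blast
qed

lemma permutation_vector_in_vtau_image:
  fixes \<sigma> :: "'n::finite \<Rightarrow> nat"
  assumes \<sigma>: "bij_betw \<sigma> UNIV {0..<CARD('n)}"
  shows "(\<chi> j. real (\<sigma> j)) \<in> vtau ` flag_collections"
proof -
  let ?n = "CARD('n)"
  define \<tau> where "\<tau> i = {j. ?n - i \<le> \<sigma> j}" for i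
  have lt: "\<sigma> j < ?n" for j
    using \<sigma> by (auto simp: bij_betw_def)
  have "card (\<tau> i) = i" if "i < ?n" for i
  proof -
    have "\<sigma> ` \<tau> i = range \<sigma> \<inter> {?n - i..<?n}"
      using lt by (auto simp: \<tau>_def)
    also have "\<dots> = {?n - i..<?n}"
      using \<sigma> by (auto simp: bij_betw_def)
    finally have "\<sigma> ` \<tau> i = {?n - i..<?n}" .
    moreover have "inj_on \<sigma> (\<tau> i)"
      using \<sigma> by (auto simp: bij_betw_def intro: inj_on_subset)
    ultimately show ?thesis
      using that by (metis card_atLeastLessThan card_image diff_diff_cancel less_imp_le)
  qed
  then have "\<tau> \<in> flag_collections"
    by (simp add: flag_collections_def)
  moreover have "vtau \<tau> = (\<chi> j. real (\<sigma> j))"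
  proof -
    have "{i\<in>{1..<?n}. j \<in> \<tau> i} = {?n - \<sigma> j..<?n}" for j
      using lt[of j] by (auto simp: \<tau>_def)
    then show ?thesis
      using lt by (simp add: vtau_def of_nat_diff less_imp_le)
  qed
  ultimately show ?thesis
    by force
qed

lemma finite_permutation_vectors: "finite (permutation_vectors :: (real^'n::finite) set)"
proof -
  have "{\<sigma>. bij_betw \<sigma> (UNIV :: 'n set) {0..<CARD('n)}} \<subseteq> UNIV \<rightarrow>\<^sub>E {0..<CARD('n)}"
    by (auto simp: bij_betw_def)
  then have "finite {\<sigma>. bij_betw \<sigma> (UNIV :: 'n set) {0..<CARD('n)}}"
    by (rule finite_subset) (simp add: finite_PiE)
  then show ?thesis
    unfolding permutation_vectors_def by (simp add: setcompr_eq_image)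
qed

lemma inner_vtau_sorted_prefix_flag_le:
  fixes a :: "real^'n::finite"
  assumes "distinct ys" "set ys = UNIV" "sorted (map (\<lambda>j. a $ j) ys)"
    and "\<tau> \<in> flag_collections"
  shows "vtau (prefix_flag ys) \<bullet> a \<le> vtau \<tau> \<bullet> a"
  unfolding inner_vtau
proof (rule sum_mono)
  fix i assume "i \<in> {1..<CARD('n)}"
  then have "card (\<tau> i) = i"
    using assms(4) by (simp add: flag_collections_def)
  then have "sum_list (map (\<lambda>j. a $ j) (take i ys)) \<le> (\<Sum>j\<in>\<tau> i. a $ j)"
    using assms(1-3) by (intro sum_list_take_sorted_le) auto
  then show "(\<Sum>j\<in>prefix_flag ys i. a $ j) \<le> (\<Sum>j\<in>\<tau> i. a $ j)"
    using assms(1) by (simp add: prefix_flag_def sum.distinct_set_conv_list)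
qed

lemma vtau_in_convex_hull_permutation_vectors:
  fixes \<tau> :: "nat \<Rightarrow> 'n::finite set"
  assumes "\<tau> \<in> flag_collections"
  shows "vtau \<tau> \<in> convex hull permutation_vectors"
proof (rule mem_convex_hull_if_linear_min_le)
  show "compact (permutation_vectors :: (real^'n) set)"
    by (rule finite_imp_compact[OF finite_permutation_vectors])
  fix a :: "real^'n"
  obtain xs :: "'n list" where xs: "distinct xs" "set xs = UNIV"
    using finite_distinct_list[of "UNIV :: 'n set"] by auto
  define ys where "ys = sort_key (\<lambda>j. a $ j) xs"
  have ys: "distinct ys" "set ys = UNIV" "sorted (map (\<lambda>j. a $ j) ys)"
    using xs by (auto simp: ys_def)
  show "\<exists>y\<in>permutation_vectors. a \<bullet> y \<le> a \<bullet> vtau \<tau>"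
    using vtau_prefix_flag_in_permutation_vectors[OF ys(1,2)]
      inner_vtau_sorted_prefix_flag_le[OF ys assms]
    by (metis inner_commute)
qed

theorem proposition9:
  assumes "CARD('n::finite) \<ge> 2"
  shows "convex hull (vtau ` (flag_collections :: (nat \<Rightarrow> 'n set) set))
           = permutohedron (\<lambda>k. real k)"
proof -
  have "permutohedron (\<lambda>k. real k) = convex hull (permutation_vectors :: (real^'n) set)"
    by (simp add: permutohedron_def permutation_vectors_def)
  moreover have "(permutation_vectors :: (real^'n) set) \<subseteq> vtau ` flag_collections"
    using permutation_vector_in_vtau_image by (auto simp: permutation_vectors_def)
  moreover have "vtau ` (flag_collections :: (nat \<Rightarrow> 'n set) set)
                   \<subseteq> convex hull permutation_vectors"
    using vtau_in_convex_hull_permutation_vectors by blast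
  ultimately show ?thesis
    by (metis antisym convex_convex_hull hull_minimal hull_mono)
qed

end
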